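(* In the setting below, define for $y\in B_r$ $$\psi(y)=\sup_{x\in A:\ \varphi(x)\le|y|}\langle x,y\rangle .$$ Then $\psi(y)=\langle T^{-1}(y),y\rangle$ for $\nu$-almost all $y$.
   Context: Setting: $d\ge2$, $A\subset\mathbb{R}^d$ compact convex, $\mu=\varrho_0\,dx$ a probability measure on $A$ equivalent to Lebesgue measure on $A$, $B_r=\{|x|\le r\}$, $\nu=\varrho_1\,dx$ a probability measure on $B_r$ equivalent to Lebesgue measure on $B_r$. For a compact convex $V$ and $x\in V$, $N_{\partial V,x}=\{\eta\in S^{d-1}:\langle\eta,z-x\rangle\le0\ \forall z\in V\}$. Let $\varphi\colon A\to[0,r]$ be continuous with convex sub-level sets $A_s=\{\varphi\le s\}$; for $x$ with $N_{\partial A_{\varphi(x)},x}$ a singleton let ${\rm n}(x)$ be its element and $T(x)=\varphi(x){\rm n}(x)$ (defined a.e.); assume $\mu\circ T^{-1}=\nu$. $T^{-1}\colon B_r\to A$ denotes a measurable map with $T(T^{-1}(y))=y$ for $\nu$-a.e. $y$ and $T^{-1}(T(x))=x$ for $\mu$-a.e. $x$ (it exists and is $\nu$-a.e. unique). *)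

theory Defs
  imports "HOL-Probability.Probability"
begin

definition normal_cone :: "'a::euclidean_space set \<Rightarrow> 'a \<Rightarrow> 'a set" where
  "normal_cone V x = {\<eta>. norm \<eta> = 1 \<and> (\<forall>z\<in>V. inner \<eta> (z - x) \<le> 0)}"

definition sublevel :: "'a set \<Rightarrow> ('a \<Rightarrow> real) \<Rightarrow> real \<Rightarrow> 'a set" where
  "sublevel A \<phi> s = {x\<in>A. \<phi> x \<le> s}"

definition has_unique_normal :: "'a::euclidean_space set \<Rightarrow> ('a \<Rightarrow> real) \<Rightarrow> 'a \<Rightarrow> bool" where
  "has_unique_normal A \<phi> x \<longleftrightarrow> (\<exists>\<eta>. normal_cone (sublevel A \<phi> (\<phi> x)) x = {\<eta>})"

definition unit_normal :: "'a::euclidean_space set \<Rightarrow> ('a \<Rightarrow> real) \<Rightarrow> 'a \<Rightarrow> 'a" where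
  "unit_normal A \<phi> x = (THE \<eta>. normal_cone (sublevel A \<phi> (\<phi> x)) x = {\<eta>})"

text \<open>T(x) = phi(x) n(x); set to 0 where n(x) is undefined (a null set by assumption).\<close>
definition transport_map :: "'a::euclidean_space set \<Rightarrow> ('a \<Rightarrow> real) \<Rightarrow> 'a \<Rightarrow> 'a" where
  "transport_map A \<phi> x = (if has_unique_normal A \<phi> x then \<phi> x *\<^sub>R unit_normal A \<phi> x else 0)"

definition psi_fun :: "'a::euclidean_space set \<Rightarrow> ('a \<Rightarrow> real) \<Rightarrow> 'a \<Rightarrow> real" where
  "psi_fun A \<phi> y = (SUP x\<in>{x\<in>A. \<phi> x \<le> norm y}. inner x y)"

end

theory Submission
  imports Defs
begin

(* If x lies in a set V and \<eta> is an outer unit normal of V at x,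
   then x maximises z \<mapsto> <z, t \<eta>> over V for every t \<ge> 0; that is, the support
   function of V in direction t \<eta> is attained at x.  For x with a unique normal,
   the transported point T x = \<phi> x \<cdot> n(x) has norm \<phi> x, so the set over which
   psi_fun takes its supremum at T x is exactly the sub-level set A_{\<phi> x}, and
   hence psi(T x) = <x, T x>.
   For \<nu>-almost every y we have y \<noteq> 0, y \<in> B_r and T (T^{-1} y) = y; since T
   vanishes where the normal is not unique, x = T^{-1} y has a unique normal, and
   the identity above at x gives psi(y) = <T^{-1} y, y>. *)

lemma normal_cone_maximises_inner:
  fixes V :: "'a::euclidean_space set"
  assumes "\<eta> \<in> normal_cone V x" and "z \<in> V" and "t \<ge> 0"
  shows "inner z (t *\<^sub>R \<eta>) \<le> inner x (t *\<^sub>R \<eta>)"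
proof -
  have "inner \<eta> (z - x) \<le> 0"
    using assms(1,2) unfolding normal_cone_def by auto
  then have "inner z \<eta> \<le> inner x \<eta>"
    by (simp add: inner_diff_right inner_commute)
  then show ?thesis
    using assms(3) by (simp add: mult_left_mono)
qed

lemma support_function_at_normal:
  fixes V :: "'a::euclidean_space set"
  assumes "\<eta> \<in> normal_cone V x" and "x \<in> V" and "t \<ge> 0"
  shows "(SUP z\<in>V. inner z (t *\<^sub>R \<eta>)) = inner x (t *\<^sub>R \<eta>)"
  by (rule cSup_eq_maximum)
     (use assms normal_cone_maximises_inner[OF assms(1) _ assms(3)] in auto)

lemma unit_normal_in_normal_cone:
  assumes "has_unique_normal A \<phi> x"
  shows "unit_normal A \<phi> x \<in> normal_cone (sublevel A \<phi> (\<phi> x)) x"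
proof -
  obtain \<eta> where \<eta>: "normal_cone (sublevel A \<phi> (\<phi> x)) x = {\<eta>}"
    using assms unfolding has_unique_normal_def by blast
  then have "unit_normal A \<phi> x = \<eta>"
    unfolding unit_normal_def by (rule the_equality) (metis \<eta> singleton_inject)
  with \<eta> show ?thesis by simp
qed

text \<open>The key identity psi(T x) = <x, T x> for points with a unique normal: T x has
  norm \<phi> x, so psi_fun at T x is the support function of A_{\<phi> x}, attained at x.\<close>
lemma psi_at_transport_image:
  assumes "x \<in> A" and "\<phi> x \<ge> 0" and "has_unique_normal A \<phi> x"
  shows "psi_fun A \<phi> (transport_map A \<phi> x) = inner x (transport_map A \<phi> x)"
proof -
  let ?n = "unit_normal A \<phi> x"
  have n: "?n \<in> normal_cone (sublevel A \<phi> (\<phi> x)) x"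
    using assms(3) by (rule unit_normal_in_normal_cone)
  have T: "transport_map A \<phi> x = \<phi> x *\<^sub>R ?n"
    using assms(3) by (simp add: transport_map_def)
  have "norm ?n = 1"
    using n by (simp add: normal_cone_def)
  then have "norm (transport_map A \<phi> x) = \<phi> x"
    using T assms(2) by simp
  then have level: "{z\<in>A. \<phi> z \<le> norm (transport_map A \<phi> x)} = sublevel A \<phi> (\<phi> x)"
    by (simp add: sublevel_def)
  have "x \<in> sublevel A \<phi> (\<phi> x)"
    using assms(1) by (simp add: sublevel_def)
  then have "(SUP z\<in>sublevel A \<phi> (\<phi> x). inner z (\<phi> x *\<^sub>R ?n)) = inner x (\<phi> x *\<^sub>R ?n)"
    by (rule support_function_at_normal[OF n _ assms(2)])
  then show ?thesis
    unfolding psi_fun_def level by (simp only: T)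
qed

text \<open>A measure with the same null sets as Lebesgue measure restricted to a Borel set S
  is concentrated on S - {0}: the complement of S and the singleton are Lebesgue-null
  inside S.\<close>
lemma AE_in_set_nonzero:
  fixes \<nu> :: "'a::euclidean_space measure"
  assumes sets_eq: "sets \<nu> = sets lborel" and S: "S \<in> sets lborel"
    and equiv: "\<And>E. E \<in> sets lborel \<Longrightarrow> (emeasure \<nu> E = 0 \<longleftrightarrow> emeasure lborel (E \<inter> S) = 0)"
  shows "AE y in \<nu>. y \<in> S \<and> y \<noteq> 0"
proof -
  define N where "N = {0} \<union> - S"
  have N_sets: "N \<in> sets lborel"
    using S unfolding N_def by auto
  have "{0::'a} \<in> null_sets lborel"
    by (simp add: countable_imp_null_set_lborel)
  moreover have "N \<inter> S \<in> sets lborel" and "N \<inter> S \<subseteq> {0}"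
    using N_sets S unfolding N_def by auto
  ultimately have "emeasure lborel (N \<inter> S) = 0"
    using null_sets_subset by blast
  then have "N \<in> null_sets \<nu>"
    using equiv[OF N_sets] N_sets sets_eq by auto
  then show ?thesis
    by (rule AE_I') (auto simp: N_def)
qed

theorem lemma12:
  fixes A :: "'a::euclidean_space set" and r :: real
    and \<rho>0 \<rho>1 :: "'a \<Rightarrow> real" and \<phi> :: "'a \<Rightarrow> real" and Tinv :: "'a \<Rightarrow> 'a"
    and \<mu> \<nu> :: "'a measure"
  assumes dim: "DIM('a) \<ge> 2"
    and A: "compact A" "convex A"
    and mu_def: "\<mu> = density lborel (\<lambda>x. ennreal (\<rho>0 x) * indicator A x)"
    and rho0: "\<rho>0 \<in> borel_measurable lborel" "\<And>x. \<rho>0 x \<ge> 0"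
    and mu_prob: "prob_space \<mu>"
    and mu_equiv: "\<And>E. E \<in> sets lborel \<Longrightarrow> (emeasure \<mu> E = 0 \<longleftrightarrow> emeasure lborel (E \<inter> A) = 0)"
    and nu_def: "\<nu> = density lborel (\<lambda>y. ennreal (\<rho>1 y) * indicator (cball 0 r) y)"
    and rho1: "\<rho>1 \<in> borel_measurable lborel" "\<And>y. \<rho>1 y \<ge> 0"
    and nu_prob: "prob_space \<nu>"
    and nu_equiv: "\<And>E. E \<in> sets lborel \<Longrightarrow> (emeasure \<nu> E = 0 \<longleftrightarrow> emeasure lborel (E \<inter> cball 0 r) = 0)"
    and phi_cont: "continuous_on A \<phi>"
    and phi_range: "\<And>x. x \<in> A \<Longrightarrow> 0 \<le> \<phi> x \<and> \<phi> x \<le> r"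
    and phi_sub: "\<And>s. convex (sublevel A \<phi> s)"
    and T_ae: "AE x in \<mu>. has_unique_normal A \<phi> x"
    and T_meas: "transport_map A \<phi> \<in> measurable \<mu> lborel"
    and push: "distr \<mu> lborel (transport_map A \<phi>) = \<nu>"
    and Tinv_meas: "Tinv \<in> measurable \<nu> lborel"
    and Tinv_range: "\<And>y. y \<in> cball 0 r \<Longrightarrow> Tinv y \<in> A"
    and Tinv_right: "AE y in \<nu>. transport_map A \<phi> (Tinv y) = y"
    and Tinv_left: "AE x in \<mu>. Tinv (transport_map A \<phi> x) = x"
  shows "AE y in \<nu>. psi_fun A \<phi> y = inner (Tinv y) y"
proof -
  have "AE y in \<nu>. y \<in> cball 0 r \<and> y \<noteq> 0"
    by (rule AE_in_set_nonzero[OF _ _ nu_equiv]) (simp_all add: nu_def)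
  then show ?thesis
    using Tinv_right
  proof eventually_elim
    case (elim y)
    have x_A: "Tinv y \<in> A"
      using elim Tinv_range by blast
    txt \<open>T vanishes where the normal is not unique, and T (Tinv y) = y \<noteq> 0.\<close>
    have "has_unique_normal A \<phi> (Tinv y)"
      using elim by (auto simp: transport_map_def split: if_splits)
    then have "psi_fun A \<phi> (transport_map A \<phi> (Tinv y))
        = inner (Tinv y) (transport_map A \<phi> (Tinv y))"
      using x_A phi_range by (intro psi_at_transport_image) auto
    then show ?case
      using elim by simp
  qed
qed

end
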